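(* Let $k\in\mathbb{Z}$, let $m$ be an odd positive integer, and let $p>1$ be an odd integer. Then $$S_{p}^{(k)}(1,m)=\sum_{i=1}^{p-2}\sum_{\nu=0}^{p-i}\binom{p}{\nu}\binom{p-\nu+1}{i}E_{\nu}^{(k)}E_{i}m^{p-i}+(p+1)E_{p}+m^{p}E_{p}^{(k)}(1),$$ where $S_p^{(k)}(1,m):=m^{p}T_{p}^{(k)}(1,m)-2\sum_{\nu=0}^{p}\binom{p}{\nu}E_{\nu}^{(k)}E_{p+1-\nu}m^{\nu-1}$. Equivalently, $$m^{p}T_{p}^{(k)}(1,m)=\sum_{i=1}^{p-2}\sum_{\nu=0}^{p-i}\binom{p}{\nu}\binom{p-\nu+1}{i}E_{\nu}^{(k)}E_{i}m^{p-i}+(p+1)E_{p}+m^{p}E_{p}^{(k)}(1)+2\sum_{\nu=0}^{p}\binom{p}{\nu}E_{\nu}^{(k)}E_{p+1-\nu}m^{\nu-1}.$$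
   Context: Euler polynomials $E_n(x)$ are defined by $\frac{2}{e^t+1}e^{xt}=\sum_{n=0}^{\infty}E_n(x)\frac{t^n}{n!}$ and $E_n=E_n(0)$. For $k\in\mathbb{Z}$, $\mathrm{Ei}_k(x)=\sum_{n=1}^{\infty}\frac{x^n}{n^k(n-1)!}$; the poly-Genocchi polynomials $G_n^{(k)}(x)$ are defined by $\frac{2\,\mathrm{Ei}_k(\log(1+t))}{e^t+1}e^{xt}=\sum_{n=0}^{\infty}G_n^{(k)}(x)\frac{t^n}{n!}$; the poly-Euler polynomials are $E_n^{(k)}(x)=\frac{G_{n+1}^{(k)}(x)}{n+1}$ ($n\ge0$), $E_n^{(k)}=E_n^{(k)}(0)$, and the poly-Euler functions are $\overline{E}_n^{(k)}(x)=E_n^{(k)}(x-[x])$, where $[x]$ is the greatest integer $\le x$. For positive integers $h,m,p$, the poly-Dedekind type DC sum is $T_p^{(k)}(h,m)=2\sum_{\mu=1}^{m-1}(-1)^{\mu}\frac{\mu}{m}\overline{E}_p^{(k)}\big(\frac{h\mu}{m}\big)$. *)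

theory Defs
  imports Complex_Main "HOL-Computational_Algebra.Formal_Power_Series"
begin

definition euler_poly :: "nat \<Rightarrow> real \<Rightarrow> real" where
  "euler_poly n x = fact n * fps_nth (fps_const 2 * fps_exp x / (fps_exp 1 + 1)) n"

definition euler_num :: "nat \<Rightarrow> real" where
  "euler_num n = euler_poly n 0"

definition Ei_fps :: "int \<Rightarrow> real fps" where
  "Ei_fps k = Abs_fps (\<lambda>n. if n = 0 then 0 else 1 / ((real n) powi k * fact (n - 1)))"

text \<open>Poly-Genocchi polynomials: 2 Ei_k(log(1+t)) e^{xt}/(e^t+1); fps_ln 1 = log(1+t).\<close>
definition poly_genocchi :: "int \<Rightarrow> nat \<Rightarrow> real \<Rightarrow> real" where
  "poly_genocchi k n x =
     fact n * fps_nth (fps_const 2 * (Ei_fps k oo fps_ln 1) * fps_exp x / (fps_exp 1 + 1)) n"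

definition poly_euler :: "int \<Rightarrow> nat \<Rightarrow> real \<Rightarrow> real" where
  "poly_euler k n x = poly_genocchi k (n + 1) x / real (n + 1)"

definition poly_euler_num :: "int \<Rightarrow> nat \<Rightarrow> real" where
  "poly_euler_num k n = poly_euler k n 0"

definition poly_euler_fun :: "int \<Rightarrow> nat \<Rightarrow> real \<Rightarrow> real" where
  "poly_euler_fun k n x = poly_euler k n (x - of_int \<lfloor>x\<rfloor>)"

definition poly_DC_sum :: "int \<Rightarrow> nat \<Rightarrow> nat \<Rightarrow> nat \<Rightarrow> real" where
  "poly_DC_sum k p h m =
     2 * (\<Sum>\<mu>=1..m-1. (-1) ^ \<mu> * (real \<mu> / real m) * poly_euler_fun k p (real h * real \<mu> / real m))"

end

(*
  For h = 1 all arguments u/m lie in [0, 1), so the poly-Euler function in T_p^(k)(1, m) is the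
  polynomial E_p^(k)(x) = sum_nu C(p, nu) E_nu^(k) x^(p - nu). Multiplying by m^p turns the DC sum
  into a combination of alternating power sums 2 sum_{u<m} (-1)^u u^n, which for odd m equal
  E_n + E_n(m) because E_n(x + 1) + E_n(x) = 2 x^n. Expanding E_n(m) by the Appell property again
  and exchanging the order of summation gives a double sum over i and nu; of its outer terms,
  i = 0 is m^p E_p^(k)(1), i = p - 1 vanishes since Euler numbers of even positive index are zero,
  and i = p is (p + 1) E_p.
*)
theory Submission
  imports Defs
begin

unbundle fps_syntax

definition euler_fps :: "real fps" where
  "euler_fps = fps_const 2 / (fps_exp 1 + 1)"

definition poly_genocchi_fps :: "int \<Rightarrow> real fps" where
  "poly_genocchi_fps k = fps_const 2 * (Ei_fps k oo fps_ln 1) / (fps_exp 1 + 1)"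

lemma euler_fps_mult_denominator: "euler_fps * (fps_exp 1 + 1) = fps_const 2"
  by (simp add: euler_fps_def fps_divide_unit inverse_mult_eq_1 mult.assoc)

lemma euler_poly_eq_fps_nth: "euler_poly n x = fact n * (euler_fps * fps_exp x) $ n"
  by (simp add: euler_poly_def euler_fps_def fps_divide_unit ac_simps)

lemma poly_genocchi_eq_fps_nth:
  "poly_genocchi k n x = fact n * (poly_genocchi_fps k * fps_exp x) $ n"
  by (simp add: poly_genocchi_def poly_genocchi_fps_def fps_divide_unit ac_simps)

lemma fact_nth_mult_fps_exp:
  fixes g :: "'a::field_char_0 fps"
  shows "fact n * (g * fps_exp x) $ n = (\<Sum>j\<le>n. of_nat (n choose j) * (fact j * g $ j) * x ^ (n - j))"
  unfolding fps_mult_nth atLeast0AtMost sum_distrib_left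
  by (intro sum.cong refl) (simp add: binomial_fact field_simps)

lemma euler_num_eq_fps_nth: "euler_num n = fact n * euler_fps $ n"
  by (simp add: euler_num_def euler_poly_eq_fps_nth)

lemma euler_poly_eq_sum:
  "euler_poly n x = (\<Sum>i\<le>n. real (n choose i) * euler_num i * x ^ (n - i))"
  by (simp add: euler_poly_eq_fps_nth fact_nth_mult_fps_exp euler_num_eq_fps_nth)

lemma poly_genocchi_fps_nth_0: "poly_genocchi_fps k $ 0 = 0"
  by (simp add: poly_genocchi_fps_def Ei_fps_def fps_divide_unit)

lemma poly_euler_num_eq_fps_nth: "poly_euler_num k n = fact n * poly_genocchi_fps k $ Suc n"
  by (simp add: poly_euler_num_def poly_euler_def poly_genocchi_eq_fps_nth fps_mult_nth
      poly_genocchi_fps_nth_0 field_simps)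

lemma poly_euler_eq_sum:
  "poly_euler k n x = (\<Sum>v\<le>n. real (n choose v) * poly_euler_num k v * x ^ (n - v))"
proof -
  have binom: "real (Suc n choose Suc v) * fact (Suc v) / real (Suc n) = real (n choose v) * fact v"
    for v
  proof -
    have "real (Suc v) * real (Suc n choose Suc v) = real (Suc n) * real (n choose v)"
      by (metis Suc_times_binomial of_nat_mult)
    then show ?thesis by (simp add: field_simps del: binomial_Suc_Suc) (metis distrib_left)
  qed
  have "poly_euler k n x =
      (\<Sum>j\<le>Suc n. real (Suc n choose j) * (fact j * poly_genocchi_fps k $ j) * x ^ (Suc n - j))
      / real (Suc n)"
    unfolding poly_euler_def poly_genocchi_eq_fps_nth fact_nth_mult_fps_exp by simp
  also have "\<dots> = (\<Sum>v\<le>n. real (Suc n choose Suc v) * fact (Suc v) / real (Suc n)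
      * poly_genocchi_fps k $ Suc v * x ^ (n - v))"
    unfolding sum.atMost_Suc_shift
    by (simp add: poly_genocchi_fps_nth_0 sum_divide_distrib mult.assoc del: binomial_Suc_Suc fact_Suc)
  also have "\<dots> = (\<Sum>v\<le>n. real (n choose v) * poly_euler_num k v * x ^ (n - v))"
    by (simp only: binom poly_euler_num_eq_fps_nth mult.assoc)
  finally show ?thesis .
qed

lemma euler_num_0: "euler_num 0 = 1"
  by (simp add: euler_num_eq_fps_nth euler_fps_def fps_divide_unit)

lemma poly_euler_num_0: "poly_euler_num k 0 = 1"
  by (simp add: poly_euler_num_eq_fps_nth poly_genocchi_fps_def fps_divide_unit fps_mult_nth
      fps_compose_nth Ei_fps_def fps_ln_nth)

lemma euler_poly_add_1: "euler_poly n (x + 1) + euler_poly n x = 2 * x ^ n"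
proof -
  have "euler_fps * fps_exp (x + 1) + euler_fps * fps_exp x
      = euler_fps * (fps_exp 1 + 1) * fps_exp x"
    by (simp add: fps_exp_add_mult algebra_simps)
  then have "euler_fps * fps_exp (x + 1) + euler_fps * fps_exp x = fps_const 2 * fps_exp x"
    by (simp only: euler_fps_mult_denominator)
  then show ?thesis
    by (simp add: euler_poly_eq_fps_nth flip: distrib_left fps_add_nth)
qed

lemma euler_fps_compose_uminus: "euler_fps oo - fps_X = euler_fps * fps_exp 1"
proof -
  let ?D = "fps_exp 1 + 1 :: real fps"
  have "(euler_fps oo - fps_X) * (fps_exp (-1) + 1) = fps_const 2"
    using fps_compose_mult_distrib[of "- fps_X" euler_fps ?D]
    by (simp add: euler_fps_mult_denominator fps_compose_add_distrib)
  moreover have "(fps_exp (-1) + 1) * fps_exp 1 = ?D"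
    by (simp add: distrib_right flip: fps_exp_add_mult)
  ultimately have "(euler_fps oo - fps_X) * ?D = euler_fps * fps_exp 1 * ?D"
    by (metis (no_types, lifting) euler_fps_mult_denominator mult.assoc mult.commute)
  moreover have "?D \<noteq> 0"
    by (metis euler_fps_mult_denominator fps_const_eq_0_iff mult_zero_right zero_neq_numeral)
  ultimately show ?thesis by simp
qed

lemma euler_poly_1: "euler_poly n 1 = (-1) ^ n * euler_num n"
  by (simp add: euler_poly_eq_fps_nth euler_num_eq_fps_nth fps_compose_uminus'
      flip: euler_fps_compose_uminus)

lemma euler_num_even_eq_0: "even n \<Longrightarrow> n \<noteq> 0 \<Longrightarrow> euler_num n = 0"
  using euler_poly_add_1[of n 0] euler_poly_1[of n] by (simp add: euler_num_def)

lemma alternating_power_sum_euler_poly: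
  "2 * (\<Sum>u<m. (-1) ^ u * real u ^ n) = euler_num n - (-1) ^ m * euler_poly n (real m)"
proof (induction m)
  case 0
  then show ?case by (simp add: euler_num_def)
next
  case (Suc m)
  have "euler_poly n (real (Suc m)) = 2 * real m ^ n - euler_poly n (real m)"
    using euler_poly_add_1[of n "real m"] by (simp add: add.commute)
  then show ?case
    using Suc.IH by (simp only: sum.lessThan_Suc) (simp add: algebra_simps)
qed

lemma sum_atMost_triangle_swap:
  fixes f :: "nat \<Rightarrow> nat \<Rightarrow> 'a::comm_monoid_add"
  shows "(\<Sum>v\<le>n. \<Sum>i\<le>n - v. f v i) = (\<Sum>i\<le>n. \<Sum>v\<le>n - i. f v i)"
proof -
  have "(\<Sum>v\<le>n. \<Sum>i\<le>n - v. f v i) = (\<Sum>v\<le>n. \<Sum>i | i \<in> {..n} \<and> v + i \<le> n. f v i)"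
    by (intro sum.cong) auto
  also have "\<dots> = (\<Sum>i\<le>n. \<Sum>v | v \<in> {..n} \<and> v + i \<le> n. f v i)"
    by (rule sum.swap_restrict) auto
  also have "\<dots> = (\<Sum>i\<le>n. \<Sum>v\<le>n - i. f v i)"
    by (intro sum.cong) auto
  finally show ?thesis .
qed

lemma poly_DC_sum_1_eq:
  assumes "m > 0"
  shows "poly_DC_sum k p 1 m =
    2 * (\<Sum>u<m. (-1) ^ u * (real u / real m) * poly_euler k p (real u / real m))"
proof -
  have "poly_euler_fun k p (real u / real m) = poly_euler k p (real u / real m)" if "u < m" for u
  proof -
    have "\<lfloor>real u / real m\<rfloor> = 0"
      using that by (simp add: floor_eq_iff field_simps)
    then show ?thesis by (simp add: poly_euler_fun_def)
  qed
  then have "poly_DC_sum k p 1 m =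
      2 * (\<Sum>u=1..m-1. (-1) ^ u * (real u / real m) * poly_euler k p (real u / real m))"
    unfolding poly_DC_sum_def of_nat_1 mult_1 by (intro arg_cong[where f = "(*) 2"] sum.cong) auto
  also have "\<dots> = 2 * (\<Sum>u<m. (-1) ^ u * (real u / real m) * poly_euler k p (real u / real m))"
    using assms by (intro arg_cong[where f = "(*) 2"] sum.mono_neutral_left) auto
  finally show ?thesis .
qed

lemma scaled_poly_DC_sum_1:
  assumes "odd m"
  shows "real m ^ p * poly_DC_sum k p 1 m =
    (\<Sum>\<nu>\<le>p. real (p choose \<nu>) * poly_euler_num k \<nu> * real m powi (int \<nu> - 1)
      * (euler_num (p + 1 - \<nu>) + euler_poly (p + 1 - \<nu>) (real m)))"
proof -
  have "m > 0"
    using assms by (rule odd_pos)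
  define M where "M = real m"
  have "M \<noteq> 0"
    using \<open>m > 0\<close> by (simp add: M_def)
  have rescale: "M ^ p * (x / M * (x / M) ^ (p - \<nu>)) = M powi (int \<nu> - 1) * x ^ (p + 1 - \<nu>)"
    if "\<nu> \<le> p" for x \<nu>
  proof -
    have "M ^ p = M ^ \<nu> * M ^ (p - \<nu>)" "x ^ (p + 1 - \<nu>) = x * x ^ (p - \<nu>)"
      using that by (simp_all flip: power_add add: Suc_diff_le)
    then show ?thesis
      using \<open>M \<noteq> 0\<close> by (simp add: power_int_diff power_divide field_simps)
  qed
  have "M ^ p * poly_DC_sum k p 1 m = (\<Sum>u<m. \<Sum>\<nu>\<le>p. 2 * (-1) ^ u
      * (real (p choose \<nu>) * poly_euler_num k \<nu>) * (M ^ p * (real u / M * (real u / M) ^ (p - \<nu>))))"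
    unfolding poly_DC_sum_1_eq[OF \<open>m > 0\<close>] poly_euler_eq_sum M_def[symmetric]
    by (simp add: sum_distrib_left mult_ac)
  also have "\<dots> = (\<Sum>u<m. \<Sum>\<nu>\<le>p. 2 * (-1) ^ u
      * (real (p choose \<nu>) * poly_euler_num k \<nu>) * (M powi (int \<nu> - 1) * real u ^ (p + 1 - \<nu>)))"
    by (intro sum.cong refl) (simp only: atMost_iff rescale)
  also have "\<dots> = (\<Sum>\<nu>\<le>p. real (p choose \<nu>) * poly_euler_num k \<nu> * M powi (int \<nu> - 1)
      * (2 * (\<Sum>u<m. (-1) ^ u * real u ^ (p + 1 - \<nu>))))"
    by (subst sum.swap) (simp add: sum_distrib_left mult_ac)
  also have "\<dots> = (\<Sum>\<nu>\<le>p. real (p choose \<nu>) * poly_euler_num k \<nu> * M powi (int \<nu> - 1)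
      * (euler_num (p + 1 - \<nu>) + euler_poly (p + 1 - \<nu>) M))"
    using assms by (simp add: alternating_power_sum_euler_poly M_def)
  finally show ?thesis
    unfolding M_def .
qed

lemma scaled_poly_DC_sum_1_double_sum:
  assumes "odd m"
  shows "real m ^ p * poly_DC_sum k p 1 m =
    (\<Sum>i\<le>p. \<Sum>\<nu>\<le>p - i. real (p choose \<nu>) * real ((p - \<nu> + 1) choose i)
        * poly_euler_num k \<nu> * euler_num i * real m ^ (p - i))
    + 2 * (\<Sum>\<nu>\<le>p. real (p choose \<nu>) * poly_euler_num k \<nu> * euler_num (p + 1 - \<nu>)
        * real m powi (int \<nu> - 1))"
proof -
  define M where "M = real m"
  have "M \<noteq> 0"
    using odd_pos[OF assms] by (simp add: M_def)
  define F where "F \<nu> i = real (p choose \<nu>) * real ((p - \<nu> + 1) choose i)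
      * poly_euler_num k \<nu> * euler_num i * M ^ (p - i)" for \<nu> i
  define H where "H \<nu> = real (p choose \<nu>) * poly_euler_num k \<nu> * euler_num (p + 1 - \<nu>)
      * M powi (int \<nu> - 1)" for \<nu>
  have summand: "real (p choose \<nu>) * poly_euler_num k \<nu> * M powi (int \<nu> - 1)
      * (euler_num (p + 1 - \<nu>) + euler_poly (p + 1 - \<nu>) M) = 2 * H \<nu> + (\<Sum>i\<le>p - \<nu>. F \<nu> i)"
    if "\<nu> \<le> p" for \<nu>
  proof -
    have Suc: "p + 1 - \<nu> = Suc (p - \<nu>)"
      using that by simp
    have "M powi (int \<nu> - 1) * M ^ (p + 1 - \<nu> - i) = M ^ (p - i)" if "i \<le> p - \<nu>" for i
    proof -
      have "M ^ \<nu> * M ^ (p + 1 - \<nu> - i) = M * M ^ (p - i)"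
        using that \<open>\<nu> \<le> p\<close> by (simp flip: power_add power_Suc add: Suc_diff_le)
      then show ?thesis
        using \<open>M \<noteq> 0\<close> by (simp add: power_int_diff field_simps)
    qed
    then have "real (p choose \<nu>) * poly_euler_num k \<nu> * M powi (int \<nu> - 1)
        * (\<Sum>i\<le>p - \<nu>. real ((p - \<nu> + 1) choose i) * euler_num i * M ^ (p + 1 - \<nu> - i))
        = (\<Sum>i\<le>p - \<nu>. F \<nu> i)"
      unfolding F_def sum_distrib_left by (intro sum.cong refl) (simp add: mult_ac)
    then show ?thesis
      unfolding H_def Suc euler_poly_eq_sum[of "Suc (p - \<nu>)"] by (simp add: algebra_simps)
  qed
  have "M ^ p * poly_DC_sum k p 1 m = (\<Sum>\<nu>\<le>p. real (p choose \<nu>) * poly_euler_num k \<nu>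
      * M powi (int \<nu> - 1) * (euler_num (p + 1 - \<nu>) + euler_poly (p + 1 - \<nu>) M))"
    unfolding M_def by (rule scaled_poly_DC_sum_1[OF assms])
  also have "\<dots> = (\<Sum>\<nu>\<le>p. 2 * H \<nu> + (\<Sum>i\<le>p - \<nu>. F \<nu> i))"
    by (intro sum.cong refl) (simp only: atMost_iff summand)
  also have "\<dots> = 2 * (\<Sum>\<nu>\<le>p. H \<nu>) + (\<Sum>\<nu>\<le>p. \<Sum>i\<le>p - \<nu>. F \<nu> i)"
    by (simp only: sum.distrib sum_distrib_left)
  finally show ?thesis
    using sum_atMost_triangle_swap[of F p] unfolding F_def H_def M_def by linarith
qed

theorem theorem11:
  fixes k :: int and m p :: nat
  assumes "odd m" and "m > 0" and "odd p" and "p > 1"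
  shows "real m ^ p * poly_DC_sum k p 1 m =
    (\<Sum>i=1..p-2. \<Sum>\<nu>=0..p-i. real (p choose \<nu>) * real ((p - \<nu> + 1) choose i)
        * poly_euler_num k \<nu> * euler_num i * real m ^ (p - i))
    + real (p + 1) * euler_num p + real m ^ p * poly_euler k p 1
    + 2 * (\<Sum>\<nu>=0..p. real (p choose \<nu>) * poly_euler_num k \<nu> * euler_num (p + 1 - \<nu>)
        * real m powi (int \<nu> - 1))"
proof -
  \<comment> \<open>The hypothesis \<open>m > 0\<close> is implied by \<open>odd m\<close>.\<close>
  define g where "g i = (\<Sum>\<nu>\<le>p - i. real (p choose \<nu>) * real ((p - \<nu> + 1) choose i)
      * poly_euler_num k \<nu> * euler_num i * real m ^ (p - i))" for i
  obtain q where q: "p = Suc (Suc q)"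
    using \<open>p > 1\<close> by (metis less_imp_Suc_add plus_1_eq_Suc add.commute)
  have "(\<Sum>i\<le>p. g i) = g 0 + (\<Sum>i=1..p-2. g i) + g (p - 1) + g p"
    unfolding q by (simp add: sum.atMost_Suc atMost_atLeast0 sum.atLeast_Suc_atMost)
  moreover have "g 0 = real m ^ p * poly_euler k p 1"
    by (simp add: g_def poly_euler_eq_sum euler_num_0 sum_distrib_left mult_ac)
  moreover have "g (p - 1) = 0"
    using assms(3,4) by (simp add: g_def euler_num_even_eq_0)
  moreover have "g p = real (p + 1) * euler_num p"
    by (simp add: g_def poly_euler_num_0)
  ultimately show ?thesis
    unfolding scaled_poly_DC_sum_1_double_sum[OF \<open>odd m\<close>] by (simp add: g_def atLeast0AtMost)
qed

end
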